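(* For every integer $n\ge1$, $$\sum_{\substack{1\le k\le n\\ \gcd(k,n)\text{ a square}}}k=\frac{n(\beta(n)+\chi(n))}{2},\qquad \prod_{\substack{1\le k\le n\\ \gcd(k,n)\text{ a square}}}k=n^{\beta(n)}\prod_{d\mid n}\left(\frac{d!}{d^d}\right)^{\lambda(n/d)}.$$
   Context: $\chi$ is the characteristic function of the set of perfect squares (with $1$ a square). $\lambda$ is the Liouville function, $\beta(n)=\sum_{d\mid n}d\,\lambda(n/d)$. *)

theory Defs
  imports "HOL-Computational_Algebra.Computational_Algebra"
begin

definition liouville :: "nat \<Rightarrow> int" where
  "liouville n = (-1) ^ size (prime_factorization n)"

definition beta :: "nat \<Rightarrow> int" where
  "beta n = (\<Sum>d | d dvd n. int d * liouville (n div d))"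

definition is_square :: "nat \<Rightarrow> bool" where
  "is_square m \<longleftrightarrow> (\<exists>j. m = j ^ 2)"

definition chi :: "nat \<Rightarrow> int" where
  "chi m = (if is_square m then 1 else 0)"

end

theory Submission
  imports Defs
begin

(* Let S(n) be the set of k in [1, n] with gcd(k, n) a perfect square.
   The whole proof rests on one identity: the divisor sum of the Liouville function
   is the indicator of the squares, sum_{d | m} lambda(d) = chi(m).  It is proved by
   multiplicative induction (both sides are multiplicative, and on a prime power p^a
   the left side is an alternating sum of signs).  Applied to m = gcd(k, n) it turns
   the condition "gcd(k, n) is a square" into a sieve:
     sum_{k in S(n)} f(k) = sum_{e | n} lambda(e) sum_{j <= n/e} f(e j)
   for any f into a commutative ring.  With f(k) = k and Gauss's formula this gives
   the sum identity; with f(k) = ln k and sum_{j <= N} ln(e j) = N ln e + ln N! it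
   gives the logarithm of the product identity, after replacing e by n/d. *)

lemma coprime_divisor_factors:
  fixes a b d :: nat
  assumes "coprime a b" "d dvd a * b"
  shows "gcd d a * gcd d b = d"
proof (rule dvd_antisym)
  have "coprime (gcd d a) (gcd d b)" using assms(1) coprime_divisors by blast
  then show "gcd d a * gcd d b dvd d" by (rule divides_mult[rotated 2]) auto
  obtain d1 d2 where "d = d1 * d2" "d1 dvd a" "d2 dvd b"
    using division_decomp[OF assms(2)] by blast
  then show "d dvd gcd d a * gcd d b" by (simp add: mult_dvd_mono)
qed

lemma gcd_coprime_divisor_product:
  fixes a b x y :: nat
  assumes "coprime a b" "x dvd a" "y dvd b"
  shows "gcd (x * y) a = x"
  using assms by (metis coprime_divisors dvd_refl gcd_mult_left_right_cancel gcd_nat.orderE)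

lemma sum_divisors_coprime_mult:
  fixes g :: "nat \<Rightarrow> 'a::comm_monoid_add"
  assumes cop: "coprime a b" and "a > 0" "b > 0"
  shows "(\<Sum>d | d dvd a * b. g d) = (\<Sum>x | x dvd a. \<Sum>y | y dvd b. g (x * y))"
proof -
  have "(\<Sum>x | x dvd a. \<Sum>y | y dvd b. g (x * y))
      = (\<Sum>(x, y) \<in> {x. x dvd a} \<times> {y. y dvd b}. g (x * y))"
    using assms by (simp add: sum.cartesian_product)
  also have "\<dots> = (\<Sum>d | d dvd a * b. g d)"
  proof (rule sum.reindex_bij_witness[where j = "\<lambda>(x, y). x * y" and i = "\<lambda>d. (gcd d a, gcd d b)"])
    fix p assume "p \<in> {x. x dvd a} \<times> {y. y dvd b}"
    then obtain x y where p: "p = (x, y)" "x dvd a" "y dvd b" by blast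
    have "gcd (x * y) a = x" using cop p(2,3) by (rule gcd_coprime_divisor_product)
    moreover have "gcd (y * x) b = y"
      using cop p(2,3) by (intro gcd_coprime_divisor_product) (auto simp: coprime_commute)
    ultimately show "(gcd (case p of (x, y) \<Rightarrow> x * y) a, gcd (case p of (x, y) \<Rightarrow> x * y) b) = p"
      using p(1) by (simp add: mult.commute)
  qed (auto intro: mult_dvd_mono coprime_divisor_factors[OF cop])
  finally show ?thesis ..
qed

lemma multiplicative_induct [consumes 1, case_names one prime_power coprime]:
  assumes m: "m > 0"
    and one: "P 1"
    and prime_power: "\<And>p a. prime p \<Longrightarrow> a > 0 \<Longrightarrow> P (p ^ a)"
    and coprime: "\<And>a b. coprime a b \<Longrightarrow> a > 1 \<Longrightarrow> b > 0 \<Longrightarrow> P a \<Longrightarrow> P b \<Longrightarrow> P (a * b)"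
  shows "P (m :: nat)"
  using m
proof (induction m rule: less_induct)
  case (less m)
  show ?case
  proof (cases "m = 1")
    case True
    with one show ?thesis by simp
  next
    case False
    then obtain p where p: "prime p" "p dvd m"
      using less.prems prime_factor_nat by blast
    define a where "a = multiplicity p m"
    obtain r where m_eq: "m = p ^ a * r" and ndvd: "\<not> p dvd r"
      unfolding a_def
      by (rule multiplicity_decompose'[of m p]) (use less.prems p(1) in \<open>auto simp: prime_imp_prime_elem\<close>)
    have a: "a > 0"
      unfolding a_def using p less.prems by (simp add: prime_multiplicity_gt_zero_iff)
    have r: "r > 0" using less.prems m_eq by (cases "r = 0") auto
    have pa: "p ^ a > 1"
      using a prime_gt_1_nat[OF p(1)] by (simp add: one_less_power del: One_nat_def)
    have "coprime (p ^ a) r"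
      using p(1) ndvd by (simp add: prime_imp_coprime coprime_commute)
    moreover have "r < m" using m_eq pa r by simp
    ultimately show ?thesis
      using coprime pa r prime_power[OF p(1) a] less.IH m_eq by metis
  qed
qed

lemma liouville_mult: "x > 0 \<Longrightarrow> y > 0 \<Longrightarrow> liouville (x * y) = liouville x * liouville y"
  by (simp add: liouville_def prime_factorization_mult power_add)

lemma liouville_prime_power: "prime p \<Longrightarrow> liouville (p ^ i) = (-1) ^ i"
  by (simp add: liouville_def prime_factorization_prime_power)

lemma is_square_iff_nth_power: "is_square m \<longleftrightarrow> is_nth_power 2 m"
  unfolding is_square_def is_nth_power_def ..

lemma chi_mult_coprime: "coprime a b \<Longrightarrow> chi (a * b) = chi a * chi b"
  by (simp add: chi_def is_square_iff_nth_power is_nth_power_mult_coprime_nat_iff)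

lemma chi_prime_power: "prime p \<Longrightarrow> chi (p ^ a) = (if even a then 1 else 0)"
  by (simp add: chi_def is_square_iff_nth_power is_nth_power_prime_power_nat_iff)

lemma sum_alternating_signs: "(\<Sum>i\<le>a. (-1::int) ^ i) = (if even a then 1 else 0)"
  by (induction a) auto

(* The Liouville divisor sum on a prime power is an alternating sum 1 - 1 + 1 - ... *)
lemma liouville_divisor_sum_prime_power:
  assumes p: "prime p"
  shows "(\<Sum>d | d dvd p ^ a. liouville d) = chi (p ^ a)"
proof -
  have "{d. d dvd p ^ a} = (\<lambda>i. p ^ i) ` {..a}"
    using divides_primepow_nat[OF p] by auto
  moreover have "inj_on (\<lambda>i. p ^ i) {..a}"
    using prime_gt_1_nat[OF p] by (auto intro: inj_onI simp: power_inject_exp)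
  ultimately have "(\<Sum>d | d dvd p ^ a. liouville d) = (\<Sum>i\<le>a. liouville (p ^ i))"
    by (simp add: sum.reindex)
  also have "\<dots> = chi (p ^ a)"
    by (simp add: liouville_prime_power[OF p] sum_alternating_signs chi_prime_power[OF p])
  finally show ?thesis .
qed

lemma liouville_divisor_sum:
  assumes "m > 0"
  shows "(\<Sum>d | d dvd m. liouville d) = chi m"
  using assms
proof (induction m rule: multiplicative_induct)
  case one
  show ?case by (simp add: chi_def is_square_iff_nth_power liouville_def)
next
  case (prime_power p a)
  then show ?case by (simp add: liouville_divisor_sum_prime_power)
next
  case (coprime a b)
  have "(\<Sum>d | d dvd a * b. liouville d) = (\<Sum>x | x dvd a. \<Sum>y | y dvd b. liouville x * liouville y)"
    using coprime by (auto simp: sum_divisors_coprime_mult intro!: sum.cong liouville_mult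
      intro: dvd_pos_nat[of a] dvd_pos_nat[of b])
  also have "\<dots> = chi a * chi b"
    unfolding sum_product[symmetric] using coprime(4,5) by simp
  finally show ?case by (simp add: chi_mult_coprime[OF coprime(1)])
qed

lemma sum_multiples_upto:
  fixes f :: "nat \<Rightarrow> 'a::comm_monoid_add"
  assumes "e dvd n" "n > 0"
  shows "(\<Sum>k | k \<in> {1..n} \<and> e dvd k. f k) = (\<Sum>j=1..n div e. f (e * j))"
proof -
  have e: "e > 0" using assms by (auto intro: dvd_pos_nat)
  show ?thesis
  proof (rule sum.reindex_bij_witness[where i = "\<lambda>j. e * j" and j = "\<lambda>k. k div e"])
    fix j assume "j \<in> {1..n div e}"
    then have "e * j \<le> e * (n div e)" "1 \<le> j" by auto
    then show "e * j \<in> {k. k \<in> {1..n} \<and> e dvd k}"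
      using assms(1) e by (auto simp: mult_le_cancel1 intro: order.trans[OF _ \<open>e * j \<le> _\<close>])
  qed (use e assms in \<open>auto simp: div_le_mono elim!: dvdE\<close>)
qed

lemma chi_gcd_divisor_sum:
  assumes "n > 0"
  shows "chi (gcd k n) = (\<Sum>e | e dvd n \<and> e dvd k. liouville e)"
proof -
  have "{e. e dvd gcd k n} = {e. e dvd n \<and> e dvd k}" by auto
  with liouville_divisor_sum[of "gcd k n"] assms show ?thesis by simp
qed

lemma square_gcd_sieve:
  fixes f :: "nat \<Rightarrow> 'a::comm_ring_1"
  assumes n: "n > 0"
  shows "(\<Sum>k | 1 \<le> k \<and> k \<le> n \<and> is_square (gcd k n). f k)
       = (\<Sum>e | e dvd n. of_int (liouville e) * (\<Sum>j=1..n div e. f (e * j)))"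
proof -
  have "(\<Sum>k | 1 \<le> k \<and> k \<le> n \<and> is_square (gcd k n). f k)
      = (\<Sum>k\<in>{1..n}. of_int (chi (gcd k n)) * f k)"
  proof -
    have "{k. 1 \<le> k \<and> k \<le> n \<and> is_square (gcd k n)} = {k \<in> {1..n}. is_square (gcd k n)}"
      by auto
    then show ?thesis
      by (simp only: sum.inter_filter[OF finite_atLeastAtMost]) (auto simp: chi_def intro: sum.cong)
  qed
  also have "\<dots> = (\<Sum>k\<in>{1..n}. \<Sum>e | e \<in> {e. e dvd n} \<and> e dvd k. of_int (liouville e) * f k)"
    using n by (simp add: chi_gcd_divisor_sum of_int_sum sum_distrib_right)
  also have "\<dots> = (\<Sum>e | e dvd n. \<Sum>k | k \<in> {1..n} \<and> e dvd k. of_int (liouville e) * f k)"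
    using n by (subst sum.swap_restrict) auto
  also have "\<dots> = (\<Sum>e | e dvd n. of_int (liouville e) * (\<Sum>j=1..n div e. f (e * j)))"
  proof (intro sum.cong refl)
    fix e assume "e \<in> {e. e dvd n}"
    then show "(\<Sum>k | k \<in> {1..n} \<and> e dvd k. of_int (liouville e) * f k)
        = of_int (liouville e) * (\<Sum>j=1..n div e. f (e * j))"
      using n by (simp only: sum_distrib_left[symmetric] sum_multiples_upto mem_Collect_eq)
  qed
  finally show ?thesis .
qed

lemma sum_divisors_complement:
  fixes g :: "nat \<Rightarrow> 'a::comm_monoid_add"
  assumes "n > 0"
  shows "(\<Sum>d | d dvd n. g (n div d)) = (\<Sum>d | d dvd n. g d)"
  using assms by (intro sum.reindex_bij_witness[of _ "(div) n" "(div) n"]) (auto elim: dvdE)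

(* beta(n) = sum_{e | n} (n/e) lambda(e), the form produced by the sieve. *)
lemma beta_complement: "n > 0 \<Longrightarrow> beta n = (\<Sum>e | e dvd n. int (n div e) * liouville e)"
  unfolding beta_def
  by (subst sum_divisors_complement[symmetric]) (auto intro!: sum.cong elim!: dvdE)

lemma sum_multiples_real:
  assumes "e dvd n"
  shows "(\<Sum>j=1..n div e. real (e * j)) = real n * (real (n div e) + 1) / 2"
proof -
  have gauss: "(\<Sum>j=1..N. real j) = real N * (real N + 1) / 2" for N
    by (induction N) (auto simp: field_simps)
  have "(\<Sum>j=1..n div e. real (e * j)) = real e * (\<Sum>j=1..n div e. real j)"
    by (simp add: sum_distrib_left)
  also have "\<dots> = real e * real (n div e) * (real (n div e) + 1) / 2"
    by (simp only: gauss)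
  also have "real e * real (n div e) = real n"
    using assms by (metis dvd_mult_div_cancel of_nat_mult)
  finally show ?thesis .
qed

lemma sum_square_gcd:
  assumes n: "n > 0"
  shows "real (\<Sum>k | 1 \<le> k \<and> k \<le> n \<and> is_square (gcd k n). k)
           = real n * real_of_int (beta n + chi n) / 2"
proof -
  have "real (\<Sum>k | 1 \<le> k \<and> k \<le> n \<and> is_square (gcd k n). k)
      = (\<Sum>e | e dvd n. of_int (liouville e) * (\<Sum>j=1..n div e. real (e * j)))"
    using square_gcd_sieve[OF n, of real] by simp
  also have "\<dots> = (\<Sum>e | e dvd n. of_int (liouville e) * (real n * (real (n div e) + 1) / 2))"
    by (intro sum.cong refl) (simp only: sum_multiples_real mem_Collect_eq)
  also have "\<dots> = real n / 2 * ((\<Sum>e | e dvd n. real (n div e) * of_int (liouville e))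
                               + (\<Sum>e | e dvd n. of_int (liouville e)))"
    by (simp add: sum_distrib_left sum.distrib[symmetric] field_simps)
  also have "\<dots> = real n / 2 * real_of_int (beta n + chi n)"
    using n by (simp add: beta_complement liouville_divisor_sum[symmetric])
  finally show ?thesis by simp
qed

lemma ln_prod_multiples:
  assumes "e > 0"
  shows "(\<Sum>j=1..N. ln (real (e * j))) = real N * ln (real e) + ln (fact N)"
proof -
  have "(\<Sum>j=1..N. ln (real (e * j))) = (\<Sum>j=1..N. ln (real e) + ln (real j))"
    using assms by (intro sum.cong refl) (auto simp: ln_mult)
  also have "ln (fact N :: real) = (\<Sum>j=1..N. ln (real j))"
    unfolding fact_prod of_nat_prod by (subst ln_prod) auto
  ultimately show ?thesis by (simp add: sum.distrib)
qed

lemma ln_powi: "x > 0 \<Longrightarrow> ln (x powi k) = real_of_int k * ln (x::real)"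
  by (simp add: powr_real_of_int'[symmetric] ln_powr)

(* The product identity on the logarithmic scale, obtained from the sieve with f = ln. *)
lemma ln_prod_square_gcd:
  assumes n: "n > 0"
  shows "ln (real (\<Prod>k | 1 \<le> k \<and> k \<le> n \<and> is_square (gcd k n). k))
       = real_of_int (beta n) * ln (real n)
         + (\<Sum>d | d dvd n. of_int (liouville (n div d)) * ln (fact d / real d ^ d))"
proof -
  let ?S = "{k. 1 \<le> k \<and> k \<le> n \<and> is_square (gcd k n)}"
  have "finite ?S" by (rule finite_subset[of _ "{..n}"]) auto
  then have "ln (real (\<Prod>k\<in>?S. k)) = (\<Sum>k\<in>?S. ln (real k))"
    unfolding of_nat_prod by (subst ln_prod) auto
  also have "\<dots> = (\<Sum>e | e dvd n. of_int (liouville e) * (\<Sum>j=1..n div e. ln (real (e * j))))"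
    using n by (rule square_gcd_sieve)
  also have "\<dots> = (\<Sum>e | e dvd n. of_int (liouville e)
                      * (real (n div e) * ln (real e) + ln (fact (n div e))))"
    using n by (intro sum.cong refl arg_cong2[where f = times] ln_prod_multiples)
      (auto intro: dvd_pos_nat)
  also have "\<dots> = (\<Sum>d | d dvd n. of_int (liouville (n div d))
                      * (real d * ln (real (n div d)) + ln (fact d)))"
    using n by (subst sum_divisors_complement[symmetric]) (auto intro!: sum.cong elim!: dvdE)
  also have "\<dots> = (\<Sum>d | d dvd n. real d * of_int (liouville (n div d)) * ln (real n)
                      + of_int (liouville (n div d)) * ln (fact d / real d ^ d))"
  proof (intro sum.cong refl)
    fix d assume "d \<in> {d. d dvd n}"
    then have d: "d > 0" "real (n div d) = real n / real d"
      using n by (auto simp: real_of_nat_div dvd_pos_nat)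
    then have ln_quot: "ln (real (n div d)) = ln (real n) - ln (real d)"
      using n by (simp add: ln_div)
    have ln_q: "ln (fact d / real d ^ d) = ln (fact d) - real d * ln (real d)"
      using d by (simp add: ln_div ln_realpow)
    show "of_int (liouville (n div d)) * (real d * ln (real (n div d)) + ln (fact d))
        = real d * of_int (liouville (n div d)) * ln (real n)
          + of_int (liouville (n div d)) * ln (fact d / real d ^ d)"
      unfolding ln_quot ln_q by (simp add: algebra_simps)
  qed
  also have "\<dots> = real_of_int (beta n) * ln (real n)
                 + (\<Sum>d | d dvd n. of_int (liouville (n div d)) * ln (fact d / real d ^ d))"
    by (simp add: sum.distrib beta_def sum_distrib_right)
  finally show ?thesis .
qed

(* Second identity of the theorem: both sides are positive and have equal logarithms. *)
lemma prod_square_gcd: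
  assumes n: "n > 0"
  shows "real (\<Prod>k | 1 \<le> k \<and> k \<le> n \<and> is_square (gcd k n). k)
           = real n powi beta n *
             (\<Prod>d | d dvd n. (fact d / real d ^ d) powi liouville (n div d))"
proof -
  have q: "(fact d / real d ^ d :: real) > 0" if "d dvd n" for d
    using that n by (auto intro: dvd_pos_nat)
  have "finite {k. 1 \<le> k \<and> k \<le> n \<and> is_square (gcd k n)}"
    by (rule finite_subset[of _ "{..n}"]) auto
  then have lhs_pos: "real (\<Prod>k | 1 \<le> k \<and> k \<le> n \<and> is_square (gcd k n). k) > 0"
    by (auto intro: prod_pos)
  have rhs_pos: "real n powi beta n * (\<Prod>d | d dvd n. (fact d / real d ^ d) powi liouville (n div d)) > 0"
    using n q by (intro mult_pos_pos prod_pos) auto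
  have ln_rhs: "ln (real n powi beta n * (\<Prod>d | d dvd n. (fact d / real d ^ d) powi liouville (n div d)))
      = real_of_int (beta n) * ln (real n)
        + (\<Sum>d | d dvd n. of_int (liouville (n div d)) * ln (fact d / real d ^ d))"
  proof -
    have "ln (\<Prod>d | d dvd n. (fact d / real d ^ d) powi liouville (n div d))
        = (\<Sum>d | d dvd n. ln ((fact d / real d ^ d) powi liouville (n div d)))"
      using n q by (subst ln_prod) (auto simp: power_int_not_zero)
    also have "\<dots> = (\<Sum>d | d dvd n. of_int (liouville (n div d)) * ln (fact d / real d ^ d))"
      using q by (intro sum.cong refl) (simp add: ln_powi)
    finally show ?thesis
      using n q by (simp add: ln_mult prod_pos ln_powi)
  qed
  have "ln (real (\<Prod>k | 1 \<le> k \<and> k \<le> n \<and> is_square (gcd k n). k))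
      = ln (real n powi beta n * (\<Prod>d | d dvd n. (fact d / real d ^ d) powi liouville (n div d)))"
    using ln_prod_square_gcd[OF n] ln_rhs by (rule trans[OF _ sym])
  with lhs_pos rhs_pos show ?thesis by (simp only: ln_inj_iff)
qed

theorem mainTheorem11:
  fixes n :: nat
  assumes "n \<ge> 1"
  shows "real (\<Sum>k | 1 \<le> k \<and> k \<le> n \<and> is_square (gcd k n). k)
           = real n * real_of_int (beta n + chi n) / 2
         \<and> real (\<Prod>k | 1 \<le> k \<and> k \<le> n \<and> is_square (gcd k n). k)
           = real n powi beta n *
             (\<Prod>d | d dvd n. (fact d / real d ^ d) powi liouville (n div d))"
  using assms sum_square_gcd prod_square_gcd by simp

end
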